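(* Let $I\subset[0,+\infty)$ be an open interval, $n\in\mathbb{N}^*$, $\beta\in\{-1,1\}$, $\kappa,\mu\in\,]-1,+\infty[$, $N\ge n$, $\xi\in[0,1]$. Let the noise $\{\varpi(\tau),\tau\ge 0\}$ satisfy (C1) and (C2). Then the mean $E[e_{\varpi}^{\beta T}(t_0)]$, the variance $\mathrm{Var}[e_{\varpi}^{\beta T}(t_0)]$ and the covariance $\mathrm{Cov}[e_{\varpi}^{\beta T_1}(t_0),e_{\varpi}^{\beta T_2}(t_0)]$ (for $T,T_1,T_2>0$) do not depend on $t_0$. If in addition the noise satisfies (C3), then $E[e_{\varpi}^{\beta T}(t_0)]=0$, $\mathrm{Cov}[e_{\varpi}^{\beta T_1}(t_0),e_{\varpi}^{\beta T_2}(t_0)]=0$ and $\mathrm{Var}[e_{\varpi}^{\beta T}(t_0)]=0$.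
   Context: For $a,b>-1$ let $w^{a,b}(t)=t^{b}(1-t)^{a}$, $P_k^{a,b}(t)=\sum_{s=0}^{k}\binom{k+a}{s}\binom{k+b}{k-s}(t-1)^{k-s}t^{s}$ and $\|P_k^{a,b}\|^2=\int_0^1 w^{a,b}(P_k^{a,b})^2$. With $q=N-n$ the Jacobi estimator kernel is $$p^{\beta T}(\tau)=\frac{(-1)^n}{(\beta T)^n}\sum_{i=0}^{q}\frac{P_i^{\mu+n,\kappa+n}(\xi)}{\|P_i^{\mu+n,\kappa+n}\|^2}\frac{d^n}{d\tau^n}\Big[w^{\mu+n,\kappa+n}(\tau)P_i^{\mu+n,\kappa+n}(\tau)\Big],$$ and for $t_0\in I$, $T>0$ with $t_0+\beta T\in I$, the noise error contribution of the Jacobi estimator $\hat D^{\mu,\kappa}_{\beta T,N,\xi}x^{(n)}(t_0)$ is the mean-square integral $e_{\varpi}^{\beta T}(t_0)=\int_0^1 p^{\beta T}(\tau)\varpi(t_0+\beta T\tau)d\tau$. (C1): $\{\varpi(\tau),\tau\ge0\}$ is a continuous parameter stochastic process with finite second moments whose mean value function and covariance kernel are continuous. (C2): for all $t_0$, $s$, $\tau$ with $t_0+s,t_0+\tau\in I$, $E[\varpi(t_0+\tau)]=\sum_{i=0}^{n-1}\nu_i t_0^{k_1(i)}\tau^i+E[\varpi(\tau)]$ and $\mathrm{Cov}[\varpi(t_0+s),\varpi(t_0+\tau)]=\Big(\sum_{i=0}^{n_1}\eta_i t_0^{k_2(i)}\tau^i\Big)\Big(\sum_{i=0}^{n_2}\eta'_i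 t_0^{k_3(i)}s^i\Big)+\mathrm{Cov}[\varpi(s),\varpi(\tau)]$, where $k_1(i),k_2(i),k_3(i)\in\mathbb{N}$, $\nu_i,\eta_i,\eta'_i\in\mathbb{R}$, $n_1,n_2\in\mathbb{N}$ with $\min(n_1,n_2)\le n-1$. (C3): for all $s,\tau\in I$, $E[\varpi(\tau)]=\sum_{i=0}^{n-1}\bar\nu_i\tau^i$ and $\mathrm{Cov}[\varpi(s),\varpi(\tau)]=\Big(\sum_{i=0}^{n_1}\bar\eta_i\tau^i\Big)\Big(\sum_{i=0}^{n_2}\bar\eta'_i s^i\Big)$ with $\bar\nu_i,\bar\eta_i,\bar\eta'_i\in\mathbb{R}$ and $\min(n_1,n_2)\le n-1$. *)

theory Defs
  imports "HOL-Probability.Probability"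
begin

definition jac_w :: "real \<Rightarrow> real \<Rightarrow> real \<Rightarrow> real" where
  "jac_w a b t = t powr b * (1 - t) powr a"

definition jacP :: "nat \<Rightarrow> real \<Rightarrow> real \<Rightarrow> real \<Rightarrow> real" where
  "jacP k a b t = (\<Sum>s = 0..k. ((real k + a) gchoose s) * ((real k + b) gchoose (k - s))
                                * (t - 1) ^ (k - s) * t ^ s)"

definition jac_norm2 :: "nat \<Rightarrow> real \<Rightarrow> real \<Rightarrow> real" where
  "jac_norm2 k a b = set_lebesgue_integral lborel {0..1::real} (\<lambda>t. jac_w a b t * (jacP k a b t)^2)"

definition jac_kernel :: "nat \<Rightarrow> nat \<Rightarrow> real \<Rightarrow> real \<Rightarrow> real \<Rightarrow> real \<Rightarrow> real \<Rightarrow> real" where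
  "jac_kernel n N \<mu> \<kappa> \<xi> h \<tau> =
     (-1) ^ n / h ^ n *
     (\<Sum>i = 0..N - n. jacP i (\<mu> + real n) (\<kappa> + real n) \<xi> / jac_norm2 i (\<mu> + real n) (\<kappa> + real n)
        * (deriv ^^ n) (\<lambda>t. jac_w (\<mu> + real n) (\<kappa> + real n) t * jacP i (\<mu> + real n) (\<kappa> + real n) t) \<tau>)"

definition Ex :: "'a measure \<Rightarrow> ('a \<Rightarrow> real) \<Rightarrow> real" where
  "Ex M Y = (\<integral>x. Y x \<partial>M)"

definition Cv :: "'a measure \<Rightarrow> ('a \<Rightarrow> real) \<Rightarrow> ('a \<Rightarrow> real) \<Rightarrow> real" where
  "Cv M Y Z = (\<integral>x. (Y x - Ex M Y) * (Z x - Ex M Z) \<partial>M)"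

definition Vr :: "'a measure \<Rightarrow> ('a \<Rightarrow> real) \<Rightarrow> real" where
  "Vr M Y = Cv M Y Y"

definition L2rv :: "'a measure \<Rightarrow> ('a \<Rightarrow> real) \<Rightarrow> bool" where
  "L2rv M Y \<longleftrightarrow> Y \<in> borel_measurable M \<and> integrable M (\<lambda>x. (Y x)^2)"

text \<open>Mean-square integral of tau |-> f(tau) X(tau) over [0,1], in the (weak / Pettis) sense
  in the Hilbert space L^2(M): Y has finite second moment and E[Y Z] = int_0^1 f(tau) E[X(tau) Z] dtau
  for every Z of finite second moment.\<close>
definition ms_integral :: "'a measure \<Rightarrow> (real \<Rightarrow> real) \<Rightarrow> (real \<Rightarrow> 'a \<Rightarrow> real) \<Rightarrow> ('a \<Rightarrow> real) \<Rightarrow> bool" where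
  "ms_integral M f X Y \<longleftrightarrow> L2rv M Y \<and>
     (\<forall>Z. L2rv M Z \<longrightarrow>
        set_integrable lborel {0..1::real} (\<lambda>\<tau>. f \<tau> * Ex M (\<lambda>x. X \<tau> x * Z x)) \<and>
        Ex M (\<lambda>x. Y x * Z x) = set_lebesgue_integral lborel {0..1::real} (\<lambda>\<tau>. f \<tau> * Ex M (\<lambda>x. X \<tau> x * Z x)))"

definition jacobi_noise_error ::
  "'a measure \<Rightarrow> (real \<Rightarrow> 'a \<Rightarrow> real) \<Rightarrow> nat \<Rightarrow> nat \<Rightarrow> real \<Rightarrow> real \<Rightarrow> real \<Rightarrow> real \<Rightarrow> real \<Rightarrow> real \<Rightarrow> ('a \<Rightarrow> real) \<Rightarrow> bool" where
  "jacobi_noise_error M X n N \<mu> \<kappa> \<xi> \<beta> T t0 Y \<longleftrightarrow>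
     ms_integral M (jac_kernel n N \<mu> \<kappa> \<xi> (\<beta> * T)) (\<lambda>\<tau>. X (t0 + \<beta> * T * \<tau>)) Y"

definition noise_C1 :: "'a measure \<Rightarrow> (real \<Rightarrow> 'a \<Rightarrow> real) \<Rightarrow> bool" where
  "noise_C1 M X \<longleftrightarrow>
     (\<forall>\<tau>\<ge>0. L2rv M (X \<tau>)) \<and>
     continuous_on {0..} (\<lambda>\<tau>. Ex M (X \<tau>)) \<and>
     continuous_on ({0..} \<times> {0..}) (\<lambda>(s, \<tau>). Cv M (X s) (X \<tau>))"

definition noise_C2 :: "'a measure \<Rightarrow> (real \<Rightarrow> 'a \<Rightarrow> real) \<Rightarrow> real set \<Rightarrow> nat \<Rightarrow> bool" where
  "noise_C2 M X I n \<longleftrightarrow>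
     (\<exists>(k1::nat \<Rightarrow> nat) (k2::nat \<Rightarrow> nat) (k3::nat \<Rightarrow> nat) (\<nu>::nat \<Rightarrow> real) (\<eta>::nat \<Rightarrow> real)
        (\<eta>'::nat \<Rightarrow> real) (n1::nat) (n2::nat).
        min n1 n2 \<le> n - 1 \<and>
        (\<forall>t0 s \<tau>. t0 + s \<in> I \<and> t0 + \<tau> \<in> I \<longrightarrow>
           Ex M (X (t0 + \<tau>)) = (\<Sum>i<n. \<nu> i * t0 ^ k1 i * \<tau> ^ i) + Ex M (X \<tau>) \<and>
           Cv M (X (t0 + s)) (X (t0 + \<tau>)) =
             (\<Sum>i\<le>n1. \<eta> i * t0 ^ k2 i * \<tau> ^ i) * (\<Sum>i\<le>n2. \<eta>' i * t0 ^ k3 i * s ^ i)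
             + Cv M (X s) (X \<tau>)))"

definition noise_C3 :: "'a measure \<Rightarrow> (real \<Rightarrow> 'a \<Rightarrow> real) \<Rightarrow> real set \<Rightarrow> nat \<Rightarrow> bool" where
  "noise_C3 M X I n \<longleftrightarrow>
     (\<exists>(\<nu>::nat \<Rightarrow> real) (\<eta>::nat \<Rightarrow> real) (\<eta>'::nat \<Rightarrow> real) (n1::nat) (n2::nat).
        min n1 n2 \<le> n - 1 \<and>
        (\<forall>s\<in>I. \<forall>\<tau>\<in>I.
           Ex M (X \<tau>) = (\<Sum>i<n. \<nu> i * \<tau> ^ i) \<and>
           Cv M (X s) (X \<tau>) = (\<Sum>i\<le>n1. \<eta> i * \<tau> ^ i) * (\<Sum>i\<le>n2. \<eta>' i * s ^ i)))"

end

theory Submission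
  imports Defs
begin

(* The Jacobi kernel is a linear combination of n-th derivatives of w^{\<mu>+n,\<kappa>+n} P_i, so n
   integrations by parts, whose boundary terms vanish thanks to the weight, show that it annihilates
   every polynomial of degree < n. The mean and the covariances of a mean-square integral are the
   corresponding integrals of the mean and covariance functions against the kernel. By (C2), moving
   the window by t0 adds to the mean a polynomial of degree < n and to the covariance a product
   A(\<tau>) B(s) one of whose factors has degree < n; both contributions are annihilated, so nothing
   depends on t0. Under (C3) the mean and covariance consist of such terms only, so all vanish. *)

definition wpoly :: "real \<Rightarrow> real \<Rightarrow> real poly \<Rightarrow> real \<Rightarrow> real" where
  "wpoly a b Q t = t powr b * (1 - t) powr a * poly Q t"

text \<open>By the product rule,
  \<open>(t^b (1-t)^a Q)' = t^(b-1) (1-t)^(a-1) (b (1-t) Q - a t Q + t (1-t) Q')\<close>.\<close>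
definition wpoly_dpoly :: "real \<Rightarrow> real \<Rightarrow> real poly \<Rightarrow> real poly" where
  "wpoly_dpoly a b Q = smult b ([:1, -1:] * Q) - smult a ([:0, 1:] * Q) + [:0, 1, -1:] * pderiv Q"

lemma has_real_derivative_wpoly:
  assumes "0 < t" "t < 1"
  shows "(wpoly a b Q has_real_derivative wpoly (a - 1) (b - 1) (wpoly_dpoly a b Q) t) (at t)"
proof -
  have deriv: "(wpoly a b Q has_real_derivative
      (b * t powr (b - 1) * (1 - t) powr a - a * (1 - t) powr (a - 1) * t powr b) * poly Q t
      + t powr b * (1 - t) powr a * poly (pderiv Q) t) (at t)"
    unfolding wpoly_def[abs_def] using assms
    by (auto intro!: derivative_eq_intros simp: field_simps)
  have powr_pred: "t powr (b - 1) = t powr b / t" "(1 - t) powr (a - 1) = (1 - t) powr a / (1 - t)"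
    using assms by (simp_all add: powr_diff)
  have "(b * t powr (b - 1) * (1 - t) powr a - a * (1 - t) powr (a - 1) * t powr b) * poly Q t
      + t powr b * (1 - t) powr a * poly (pderiv Q) t = wpoly (a - 1) (b - 1) (wpoly_dpoly a b Q) t"
    using assms unfolding wpoly_def wpoly_dpoly_def powr_pred by (simp add: field_simps)
  with deriv show ?thesis
    by simp
qed

fun wpoly_dpoly_iter :: "real \<Rightarrow> real \<Rightarrow> real poly \<Rightarrow> nat \<Rightarrow> real poly" where
  "wpoly_dpoly_iter a b Q 0 = Q"
| "wpoly_dpoly_iter a b Q (Suc k) = wpoly_dpoly (a - real k) (b - real k) (wpoly_dpoly_iter a b Q k)"

lemma higher_deriv_wpoly:
  "t \<in> {0<..<1} \<Longrightarrow>
    (deriv ^^ k) (wpoly a b Q) t = wpoly (a - real k) (b - real k) (wpoly_dpoly_iter a b Q k) t"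
proof (induction k arbitrary: t)
  case 0
  then show ?case by simp
next
  case (Suc k)
  have "((deriv ^^ k) (wpoly a b Q) has_real_derivative
      wpoly (a - real k - 1) (b - real k - 1) (wpoly_dpoly_iter a b Q (Suc k)) t) (at t)"
    by (rule has_field_derivative_transform_within_open[where S = "{0<..<1}"])
       (use Suc in \<open>auto intro: has_real_derivative_wpoly\<close>)
  then show ?case
    by (simp add: DERIV_imp_deriv algebra_simps)
qed

lemma wpoly_integrable:
  assumes "a > -1" "b > -1"
  shows "set_integrable lborel {0..1} (wpoly a b Q)"
proof -
  have "((\<lambda>t. t powr b * (1 - t) powr a) has_integral Beta (b + 1) (a + 1)) {0..1}"
    using has_integral_Beta_real[of "b + 1" "a + 1"] assms by simp
  then have "(\<lambda>t. t powr b * (1 - t) powr a) absolutely_integrable_on {0..1}"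
    by (intro nonnegative_absolutely_integrable_1) auto
  then have weight: "set_integrable lborel {0..1} (\<lambda>t. t powr b * (1 - t) powr a)"
    by (simp add: set_integrable_def integrable_completion)
  have "bounded (poly Q ` {0..1})"
    by (intro compact_imp_bounded compact_continuous_image continuous_intros) auto
  then obtain C where C: "\<forall>t\<in>{0..1}. \<bar>poly Q t\<bar> \<le> C"
    by (auto simp: bounded_real)
  have "poly Q \<in> borel_measurable borel"
    by (intro borel_measurable_continuous_onI continuous_intros)
  show ?thesis
  proof (rule set_integrable_bound[OF set_integrable_mult_right[OF weight, of C]])
    show "set_borel_measurable lborel {0..1} (wpoly a b Q)"
      unfolding set_borel_measurable_def wpoly_def
      using \<open>poly Q \<in> borel_measurable borel\<close> by measurable
    show "AE t in lborel. t \<in> {0..1} \<longrightarrow> norm (wpoly a b Q t) \<le> norm (C * (t powr b * (1 - t) powr a))"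
      using C by (intro AE_I2) (auto simp: wpoly_def abs_mult mult.commute[of _ "\<bar>poly Q _\<bar>"]
          intro!: mult_right_mono order_trans[OF _ abs_ge_self])
  qed
qed

lemma poly_mult_wpoly: "poly R t * wpoly a b Q t = wpoly a b (R * Q) t"
  by (simp add: wpoly_def)

lemma wpoly_integration_by_parts:
  assumes "a > 0" "b > 0"
  shows "(LINT t:{0..1}|lborel. poly R t * wpoly (a - 1) (b - 1) (wpoly_dpoly a b Q) t)
    = - (LINT t:{0..1}|lborel. poly (pderiv R) t * wpoly a b Q t)"
proof -
  define F where "F t = poly R t * wpoly a b Q t" for t
  define F' where "F' t = poly (pderiv R) t * wpoly a b Q t
    + poly R t * wpoly (a - 1) (b - 1) (wpoly_dpoly a b Q) t" for t
  have int1: "set_integrable lborel {0..1} (\<lambda>t. poly (pderiv R) t * wpoly a b Q t)"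
    and int2: "set_integrable lborel {0..1} (\<lambda>t. poly R t * wpoly (a - 1) (b - 1) (wpoly_dpoly a b Q) t)"
    unfolding poly_mult_wpoly using assms by (auto intro: wpoly_integrable)
  have "continuous_on {0..1} F"
    unfolding F_def wpoly_def using assms by (intro continuous_intros continuous_on_powr') auto
  moreover have "(F has_vector_derivative F' t) (at t)" if "t \<in> {0<..<1}" for t
    unfolding F_def F'_def has_real_derivative_iff_has_vector_derivative[symmetric] using that
    by (auto intro!: derivative_eq_intros has_real_derivative_wpoly)
  ultimately have "(F' has_integral (F 1 - F 0)) {0..1}"
    by (intro fundamental_theorem_of_calculus_interior) auto
  moreover have "F 1 = 0" "F 0 = 0"
    unfolding F_def wpoly_def using assms by auto
  moreover have "set_integrable lborel {0..1} F'"
    unfolding F'_def using int1 int2 by (rule set_integral_add)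
  ultimately have "(LINT t:{0..1}|lborel. F' t) = 0"
    by (simp add: set_borel_integral_eq_integral integral_unique)
  then show ?thesis
    unfolding F'_def set_integral_add(2)[OF int1 int2] by simp
qed

lemma wpoly_dpoly_iter_moments_vanish:
  assumes "a - real k > -1" "b - real k > -1" "degree R < k"
  shows "(LINT t:{0..1}|lborel. poly R t * wpoly (a - real k) (b - real k) (wpoly_dpoly_iter a b Q k) t) = 0"
  using assms
proof (induction k arbitrary: R)
  case 0
  then show ?case by simp
next
  case (Suc k)
  have "(LINT t:{0..1}|lborel. poly R t * wpoly (a - real (Suc k)) (b - real (Suc k)) (wpoly_dpoly_iter a b Q (Suc k)) t)
      = - (LINT t:{0..1}|lborel. poly (pderiv R) t * wpoly (a - real k) (b - real k) (wpoly_dpoly_iter a b Q k) t)"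
    using wpoly_integration_by_parts[of "a - real k" "b - real k"] Suc.prems by (simp add: algebra_simps)
  also have "\<dots> = 0"
  proof (cases "pderiv R = 0")
    case False
    then have "degree (pderiv R) < k"
      using Suc.prems by (simp add: degree_pderiv pderiv_eq_0_iff)
    then show ?thesis
      using Suc by simp
  qed simp
  finally show ?case .
qed

definition vanishing_moments :: "nat \<Rightarrow> (real \<Rightarrow> real) \<Rightarrow> bool" where
  "vanishing_moments n p \<longleftrightarrow>
     (\<forall>R. set_integrable lborel {0..1} (\<lambda>\<tau>. p \<tau> * poly R \<tau>) \<and>
          (degree R < n \<longrightarrow> (LINT \<tau>:{0..1}|lborel. p \<tau> * poly R \<tau>) = 0))"

lemma vanishing_momentsD:
  assumes "vanishing_moments n p"
  shows "set_integrable lborel {0..1} (\<lambda>\<tau>. p \<tau> * poly R \<tau>)"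
    and "degree R < n \<Longrightarrow> (LINT \<tau>:{0..1}|lborel. p \<tau> * poly R \<tau>) = 0"
  using assms unfolding vanishing_moments_def by blast+

lemma vanishing_moments_cmult: "vanishing_moments n p \<Longrightarrow> vanishing_moments n (\<lambda>\<tau>. c * p \<tau>)"
  by (auto simp: vanishing_moments_def mult.assoc)

lemma vanishing_moments_zero: "vanishing_moments n (\<lambda>\<tau>. 0)"
  by (simp add: vanishing_moments_def set_integrable_def)

lemma vanishing_moments_add:
  "vanishing_moments n p \<Longrightarrow> vanishing_moments n q \<Longrightarrow> vanishing_moments n (\<lambda>\<tau>. p \<tau> + q \<tau>)"
  by (simp add: vanishing_moments_def distrib_right)

lemma vanishing_moments_sum:
  "(\<And>i. i \<in> A \<Longrightarrow> vanishing_moments n (p i)) \<Longrightarrow> vanishing_moments n (\<lambda>\<tau>. \<Sum>i\<in>A. p i \<tau>)"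
  by (induction A rule: infinite_finite_induct) (auto intro: vanishing_moments_zero vanishing_moments_add)

text \<open>Away from the endpoints the \<open>n\<close>-th derivative is again a weighted polynomial, now with
  weight exponents \<open>a, b > -1\<close>; \<open>n\<close> integrations by parts move all derivatives onto \<open>R\<close>.\<close>
lemma vanishing_moments_higher_deriv_wpoly:
  assumes "a > -1" "b > -1"
  shows "vanishing_moments n ((deriv ^^ n) (wpoly (a + real n) (b + real n) Q))"
  unfolding vanishing_moments_def
proof (intro allI conjI impI)
  fix R :: "real poly"
  let ?D = "(deriv ^^ n) (wpoly (a + real n) (b + real n) Q)"
  let ?W = "\<lambda>t. poly R t * wpoly a b (wpoly_dpoly_iter (a + real n) (b + real n) Q n) t"
  have eq: "indicator {0..1} t *\<^sub>R (?D t * poly R t) = indicator {0..1} t *\<^sub>R ?W t"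
    if "t \<notin> {0, 1}" for t
    using that by (auto simp: higher_deriv_wpoly mult.commute split: split_indicator)
  have "set_integrable lborel {0..1} ?W"
    unfolding poly_mult_wpoly using assms by (rule wpoly_integrable)
  then show "set_integrable lborel {0..1} (\<lambda>t. ?D t * poly R t)"
    unfolding set_integrable_def by (subst integrable_discrete_difference[where X = "{0, 1}"]) (use eq in auto)
  assume "degree R < n"
  then have "(LINT t:{0..1}|lborel. ?W t) = 0"
    using wpoly_dpoly_iter_moments_vanish[of "a + real n" n "b + real n" R Q] assms by simp
  then show "(LINT t:{0..1}|lborel. ?D t * poly R t) = 0"
    unfolding set_lebesgue_integral_def by (subst integral_discrete_difference[where X = "{0, 1}"]) (use eq in auto)
qed

lemma vanishing_moments_jac_kernel:
  assumes "\<mu> > -1" "\<kappa> > -1"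
  shows "vanishing_moments n (jac_kernel n N \<mu> \<kappa> \<xi> h)"
proof -
  \<comment> \<open>Only the shape of the kernel matters: its coefficients are arbitrary, so the junk value
    \<open>x / 0 = 0\<close> of a vanishing norm is harmless.\<close>
  define P where "P i a b = (\<Sum>s = 0..i. smult (((real i + a) gchoose s) * ((real i + b) gchoose (i - s)))
    ([:-1, 1:] ^ (i - s) * [:0, 1:] ^ s))" for i a b
  have jac_wpoly: "(\<lambda>t. jac_w a b t * jacP i a b t) = wpoly a b (P i a b)" for a b i
    by (rule ext) (simp add: P_def jac_w_def jacP_def wpoly_def poly_sum algebra_simps)
  show ?thesis
    unfolding jac_kernel_def jac_wpoly using assms
    by (intro vanishing_moments_cmult vanishing_moments_sum vanishing_moments_higher_deriv_wpoly)
qed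

lemma set_integral_eq_cmult_add:
  fixes f g h :: "'a \<Rightarrow> real"
  assumes "A \<in> sets M" "set_integrable M A f" "set_integrable M A g"
    and "\<And>x. x \<in> A \<Longrightarrow> f x = c * g x + h x"
  shows "set_integrable M A h"
    and "(LINT x:A|M. f x) = c * (LINT x:A|M. g x) + (LINT x:A|M. h x)"
proof -
  have h_eq: "\<And>x. x \<in> A \<Longrightarrow> h x = f x - c * g x"
    using assms(4) by simp
  have cg: "set_integrable M A (\<lambda>x. c * g x)"
    using assms(3) by simp
  show h: "set_integrable M A h"
    using set_integral_diff(1)[OF assms(2) cg] by (subst set_integrable_cong[OF refl refl h_eq]) auto
  have "(LINT x:A|M. f x) = (LINT x:A|M. c * g x + h x)"
    using assms(1,4) by (intro set_lebesgue_integral_cong) auto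
  then show "(LINT x:A|M. f x) = c * (LINT x:A|M. g x) + (LINT x:A|M. h x)"
    using set_integral_add(2)[OF cg h] by simp
qed

lemma L2rv_const: "prob_space M \<Longrightarrow> L2rv M (\<lambda>x. c)"
  by (simp add: L2rv_def prob_space.finite_measure finite_measure.integrable_const)

lemma L2rv_integrable: "prob_space M \<Longrightarrow> L2rv M Y \<Longrightarrow> integrable M Y"
  unfolding L2rv_def
  by (blast intro: finite_measure.square_integrable_imp_integrable prob_space.finite_measure)

lemma L2rv_integrable_mult:
  assumes "L2rv M Y" "L2rv M Z"
  shows "integrable M (\<lambda>x. Y x * Z x)"
proof (rule Bochner_Integration.integrable_bound)
  show "integrable M (\<lambda>x. (Y x)\<^sup>2 + (Z x)\<^sup>2)"
    using assms by (simp add: L2rv_def)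
  show "(\<lambda>x. Y x * Z x) \<in> borel_measurable M"
    using assms by (simp add: L2rv_def borel_measurable_times)
  have "\<bar>Y x * Z x\<bar> \<le> (Y x)\<^sup>2 + (Z x)\<^sup>2" for x
  proof -
    have "2 * \<bar>Y x * Z x\<bar> \<le> (Y x)\<^sup>2 + (Z x)\<^sup>2"
      using sum_squares_bound[of "\<bar>Y x\<bar>" "\<bar>Z x\<bar>"] by (simp add: abs_mult mult.assoc)
    moreover have "0 \<le> \<bar>Y x * Z x\<bar>"
      by (rule abs_ge_zero)
    ultimately show ?thesis
      by linarith
  qed
  then show "AE x in M. norm (Y x * Z x) \<le> norm ((Y x)\<^sup>2 + (Z x)\<^sup>2)"
    by (intro AE_I2) simp
qed

lemma Cv_commute: "Cv M Y Z = Cv M Z Y"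
  unfolding Cv_def by (simp add: mult.commute)

lemma Cv_eq_Ex_mult:
  assumes "prob_space M" "L2rv M Y" "L2rv M Z"
  shows "Cv M Y Z = Ex M (\<lambda>x. Y x * Z x) - Ex M Y * Ex M Z"
proof -
  interpret prob_space M by fact
  have "integrable M Y" "integrable M Z" "integrable M (\<lambda>x. Y x * Z x)"
    using assms by (auto intro: L2rv_integrable L2rv_integrable_mult)
  then show ?thesis
    unfolding Cv_def Ex_def by (simp add: algebra_simps prob_space)
qed

lemma ms_integral_Ex:
  assumes "prob_space M" "ms_integral M f X Y"
  shows "set_integrable lborel {0..1} (\<lambda>\<tau>. f \<tau> * Ex M (X \<tau>))"
    and "Ex M Y = (LINT \<tau>:{0..1}|lborel. f \<tau> * Ex M (X \<tau>))"
  using assms(2) L2rv_const[OF assms(1), of 1] unfolding ms_integral_def by auto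

lemma ms_integral_Cv:
  assumes "prob_space M" "ms_integral M f X Y" "L2rv M Z"
    and X: "\<And>\<tau>. \<tau> \<in> {0..1} \<Longrightarrow> L2rv M (X \<tau>)"
  shows "set_integrable lborel {0..1} (\<lambda>\<tau>. f \<tau> * Cv M (X \<tau>) Z)"
    and "Cv M Y Z = (LINT \<tau>:{0..1}|lborel. f \<tau> * Cv M (X \<tau>) Z)"
proof -
  have Y: "L2rv M Y"
    and int_mult: "set_integrable lborel {0..1} (\<lambda>\<tau>. f \<tau> * Ex M (\<lambda>x. X \<tau> x * Z x))"
    and Ex_mult: "Ex M (\<lambda>x. Y x * Z x) = (LINT \<tau>:{0..1}|lborel. f \<tau> * Ex M (\<lambda>x. X \<tau> x * Z x))"
    using assms(2,3) unfolding ms_integral_def by blast+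
  note int_Ex = ms_integral_Ex[OF assms(1,2)]
  have split: "f \<tau> * Ex M (\<lambda>x. X \<tau> x * Z x) = Ex M Z * (f \<tau> * Ex M (X \<tau>)) + f \<tau> * Cv M (X \<tau>) Z"
    if "\<tau> \<in> {0..1}" for \<tau>
    by (simp add: Cv_eq_Ex_mult[OF assms(1) X[OF that] assms(3)] algebra_simps)
  note parts = set_integral_eq_cmult_add[OF _ int_mult int_Ex(1) split]
  show "set_integrable lborel {0..1} (\<lambda>\<tau>. f \<tau> * Cv M (X \<tau>) Z)"
    using parts(1) by simp
  show "Cv M Y Z = (LINT \<tau>:{0..1}|lborel. f \<tau> * Cv M (X \<tau>) Z)"
    using parts(2) Ex_mult int_Ex(2) Cv_eq_Ex_mult[OF assms(1) Y assms(3)] by simp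
qed

lemma ms_integral_Ex_poly_shift:
  assumes "prob_space M" "ms_integral M p X Y" "vanishing_moments n p" "degree R < n"
    and shift: "\<And>\<tau>. \<tau> \<in> {0..1} \<Longrightarrow> Ex M (X \<tau>) = poly R \<tau> + g \<tau>"
  shows "Ex M Y = (LINT \<tau>:{0..1}|lborel. p \<tau> * g \<tau>)"
proof -
  have "p \<tau> * Ex M (X \<tau>) = 1 * (p \<tau> * poly R \<tau>) + p \<tau> * g \<tau>" if "\<tau> \<in> {0..1}" for \<tau>
    using shift[OF that] by (simp add: algebra_simps)
  from set_integral_eq_cmult_add(2)[OF _ ms_integral_Ex(1)[OF assms(1,2)] vanishing_momentsD(1)[OF assms(3)] this]
  show ?thesis
    using ms_integral_Ex(2)[OF assms(1,2)] vanishing_momentsD(2)[OF assms(3,4)] by simp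
qed

text \<open>The polynomial part \<open>A(\<tau>) B(s)\<close> of the covariance is annihilated by one of the two
  kernels, whichever is paired with the factor of degree \<open>< n\<close>.\<close>
lemma ms_integral_Cv_poly_shift:
  assumes P: "prob_space M"
    and Y1: "ms_integral M p1 X1 Y1" and Y2: "ms_integral M p2 X2 Y2"
    and p1: "vanishing_moments n p1" and p2: "vanishing_moments n p2"
    and X1: "\<And>\<tau>. \<tau> \<in> {0..1} \<Longrightarrow> L2rv M (X1 \<tau>)"
    and X2: "\<And>s. s \<in> {0..1} \<Longrightarrow> L2rv M (X2 s)"
    and deg: "degree A < n \<or> degree B < n"
    and shift: "\<And>s \<tau>. s \<in> {0..1} \<Longrightarrow> \<tau> \<in> {0..1} \<Longrightarrow>
      Cv M (X2 s) (X1 \<tau>) = poly A \<tau> * poly B s + K s \<tau>"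
  shows "Cv M Y1 Y2 = (LINT \<tau>:{0..1}|lborel. p1 \<tau> * (LINT s:{0..1}|lborel. p2 s * K s \<tau>))"
proof -
  define c where "c = (LINT s:{0..1}|lborel. p2 s * poly B s)"
  have inner: "Cv M (X1 \<tau>) Y2 = poly A \<tau> * c + (LINT s:{0..1}|lborel. p2 s * K s \<tau>)"
    if \<tau>: "\<tau> \<in> {0..1}" for \<tau>
  proof -
    have "p2 s * Cv M (X2 s) (X1 \<tau>) = poly A \<tau> * (p2 s * poly B s) + p2 s * K s \<tau>"
      if "s \<in> {0..1}" for s
      using shift[OF that \<tau>] by (simp add: algebra_simps)
    from set_integral_eq_cmult_add(2)[OF _ ms_integral_Cv(1)[OF P Y2 X1[OF \<tau>] X2]
        vanishing_momentsD(1)[OF p2] this]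
    show ?thesis
      using ms_integral_Cv(2)[OF P Y2 X1[OF \<tau>] X2] Cv_commute[of M "X1 \<tau>" Y2] by (simp add: c_def)
  qed
  have "p1 \<tau> * Cv M (X1 \<tau>) Y2 = c * (p1 \<tau> * poly A \<tau>) + p1 \<tau> * (LINT s:{0..1}|lborel. p2 s * K s \<tau>)"
    if "\<tau> \<in> {0..1}" for \<tau>
    using inner[OF that] by (simp add: algebra_simps)
  note parts = set_integral_eq_cmult_add(2)[OF _ ms_integral_Cv(1)[OF P Y1 _ X1] vanishing_momentsD(1)[OF p1] this]
  have "c * (LINT \<tau>:{0..1}|lborel. p1 \<tau> * poly A \<tau>) = 0"
    using deg vanishing_momentsD(2)[OF p1] vanishing_momentsD(2)[OF p2] by (auto simp: c_def)
  then show ?thesis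
    using parts ms_integral_Cv(2)[OF P Y1 _ X1] Y2 by (simp add: ms_integral_def)
qed

lemma is_interval_affine_segment:
  fixes I :: "real set"
  assumes "is_interval I" "t0 \<in> I" "t0 + h \<in> I" "\<tau> \<in> {0..1}"
  shows "t0 + h * \<tau> \<in> I"
proof -
  have "(1 - \<tau>) *\<^sub>R t0 + \<tau> *\<^sub>R (t0 + h) \<in> I"
    using assms by (intro convexD) (auto simp: is_interval_convex_1)
  then show ?thesis
    by (simp add: algebra_simps)
qed

lemma power_sum_atMost_eq_poly:
  obtains R :: "real poly" where "degree R \<le> m" "\<And>x. (\<Sum>i\<le>m. c i * x ^ i) = poly R x"
proof
  show "degree (\<Sum>i\<le>m. monom (c i) i) \<le> m"
    by (intro degree_sum_le) (auto intro: order_trans[OF degree_monom_le])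
qed (simp add: poly_sum poly_monom)

lemma power_sum_eq_poly:
  assumes "n \<ge> 1"
  obtains R :: "real poly" where "degree R < n" "\<And>x. (\<Sum>i<n. c i * x ^ i) = poly R x"
proof -
  obtain R where R: "degree R \<le> n - 1" "\<And>x. (\<Sum>i\<le>n - 1. c i * x ^ i) = poly R x"
    using power_sum_atMost_eq_poly[of "n - 1" c] by blast
  have "{..<n} = {..n - 1}"
    using assms by auto
  with R assms show ?thesis
    by (intro that[of R]) auto
qed

lemma poly_pcompose_linear: "poly (p \<circ>\<^sub>p [:a, b:]) x = poly p (a + b * x)"
  by (simp add: poly_pcompose mult.commute)

lemma degree_pcompose_linear_le: "degree (p \<circ>\<^sub>p [:a, b:]) \<le> degree p"
  using degree_pcompose_le[of p "[:a, b:]"] by (simp add: order_trans)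

lemma noise_C2_polynomial_parts:
  assumes "noise_C2 M X I n" "n \<ge> 1"
  obtains R A B where "degree R < n" "degree A < n \<or> degree B < n"
    and "\<And>\<tau>. t0 + \<tau> \<in> I \<Longrightarrow> Ex M (X (t0 + \<tau>)) = poly R \<tau> + Ex M (X \<tau>)"
    and "\<And>s \<tau>. t0 + s \<in> I \<Longrightarrow> t0 + \<tau> \<in> I \<Longrightarrow>
      Cv M (X (t0 + s)) (X (t0 + \<tau>)) = poly A \<tau> * poly B s + Cv M (X s) (X \<tau>)"
proof -
  obtain k1 k2 k3 :: "nat \<Rightarrow> nat" and \<nu> \<eta> \<eta>' :: "nat \<Rightarrow> real" and n1 n2 where
    min: "min n1 n2 \<le> n - 1" and
    C2: "\<And>s \<tau>. t0 + s \<in> I \<Longrightarrow> t0 + \<tau> \<in> I \<Longrightarrow>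
      Ex M (X (t0 + \<tau>)) = (\<Sum>i<n. \<nu> i * t0 ^ k1 i * \<tau> ^ i) + Ex M (X \<tau>) \<and>
      Cv M (X (t0 + s)) (X (t0 + \<tau>)) =
        (\<Sum>i\<le>n1. \<eta> i * t0 ^ k2 i * \<tau> ^ i) * (\<Sum>i\<le>n2. \<eta>' i * t0 ^ k3 i * s ^ i) + Cv M (X s) (X \<tau>)"
    using assms(1) unfolding noise_C2_def by blast
  obtain R where R: "degree R < n" "\<And>x. (\<Sum>i<n. \<nu> i * t0 ^ k1 i * x ^ i) = poly R x"
    using power_sum_eq_poly[OF assms(2), where c = "\<lambda>i. \<nu> i * t0 ^ k1 i"] by blast
  obtain A where A: "degree A \<le> n1" "\<And>x. (\<Sum>i\<le>n1. \<eta> i * t0 ^ k2 i * x ^ i) = poly A x"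
    using power_sum_atMost_eq_poly[where c = "\<lambda>i. \<eta> i * t0 ^ k2 i"] by blast
  obtain B where B: "degree B \<le> n2" "\<And>x. (\<Sum>i\<le>n2. \<eta>' i * t0 ^ k3 i * x ^ i) = poly B x"
    using power_sum_atMost_eq_poly[where c = "\<lambda>i. \<eta>' i * t0 ^ k3 i"] by blast
  have "degree A < n \<or> degree B < n"
    using min A(1) B(1) assms(2) by linarith
  with R(1) show ?thesis
    by (rule that) (use C2 R(2) A(2) B(2) in auto)
qed

lemma noise_C3_polynomial_parts:
  assumes "noise_C3 M X I n" "n \<ge> 1"
  obtains R A B where "degree R < n" "degree A < n \<or> degree B < n"
    and "\<And>\<tau>. \<tau> \<in> I \<Longrightarrow> Ex M (X \<tau>) = poly R \<tau>"
    and "\<And>s \<tau>. s \<in> I \<Longrightarrow> \<tau> \<in> I \<Longrightarrow> Cv M (X s) (X \<tau>) = poly A \<tau> * poly B s"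
proof -
  obtain \<nu> \<eta> \<eta>' :: "nat \<Rightarrow> real" and n1 n2 where
    min: "min n1 n2 \<le> n - 1" and
    C3: "\<And>s \<tau>. s \<in> I \<Longrightarrow> \<tau> \<in> I \<Longrightarrow> Ex M (X \<tau>) = (\<Sum>i<n. \<nu> i * \<tau> ^ i) \<and>
      Cv M (X s) (X \<tau>) = (\<Sum>i\<le>n1. \<eta> i * \<tau> ^ i) * (\<Sum>i\<le>n2. \<eta>' i * s ^ i)"
    using assms(1) unfolding noise_C3_def by blast
  obtain R where R: "degree R < n" "\<And>x. (\<Sum>i<n. \<nu> i * x ^ i) = poly R x"
    using power_sum_eq_poly[OF assms(2)] by blast
  obtain A where A: "degree A \<le> n1" "\<And>x. (\<Sum>i\<le>n1. \<eta> i * x ^ i) = poly A x"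
    using power_sum_atMost_eq_poly by blast
  obtain B where B: "degree B \<le> n2" "\<And>x. (\<Sum>i\<le>n2. \<eta>' i * x ^ i) = poly B x"
    using power_sum_atMost_eq_poly by blast
  have "degree A < n \<or> degree B < n"
    using min A(1) B(1) assms(2) by linarith
  with R(1) show ?thesis
    by (rule that) (use C3 R(2) A(2) B(2) in auto)
qed

lemma noise_C1_L2rv_on_segment:
  assumes "noise_C1 M X" "I \<subseteq> {0..}" "is_interval I" "t0 \<in> I" "t0 + h \<in> I" "\<tau> \<in> {0..1}"
  shows "L2rv M (X (t0 + h * \<tau>))"
  using assms is_interval_affine_segment[OF assms(3-6)] unfolding noise_C1_def by auto

lemma noise_C2_Ex_ms_integral:
  assumes "prob_space M" "noise_C2 M X I n" "n \<ge> 1" "is_interval I" "t0 \<in> I" "t0 + h \<in> I"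
    and "vanishing_moments n p" "ms_integral M p (\<lambda>\<tau>. X (t0 + h * \<tau>)) Y"
  shows "Ex M Y = (LINT \<tau>:{0..1}|lborel. p \<tau> * Ex M (X (h * \<tau>)))"
proof -
  obtain R where "degree R < n" and shift: "\<And>\<tau>. t0 + \<tau> \<in> I \<Longrightarrow> Ex M (X (t0 + \<tau>)) = poly R \<tau> + Ex M (X \<tau>)"
    using noise_C2_polynomial_parts[OF assms(2,3), of t0] by metis
  show ?thesis
  proof (rule ms_integral_Ex_poly_shift[OF assms(1,8,7)])
    show "degree (R \<circ>\<^sub>p [:0, h:]) < n"
      using degree_pcompose_linear_le \<open>degree R < n\<close> by (rule le_less_trans)
    show "Ex M (X (t0 + h * \<tau>)) = poly (R \<circ>\<^sub>p [:0, h:]) \<tau> + Ex M (X (h * \<tau>))" if "\<tau> \<in> {0..1}" for \<tau>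
      using shift is_interval_affine_segment[OF assms(4-6) that] by (simp add: poly_pcompose_linear)
  qed
qed

lemma noise_C3_Ex_ms_integral:
  assumes "prob_space M" "noise_C3 M X I n" "n \<ge> 1" "is_interval I" "t0 \<in> I" "t0 + h \<in> I"
    and "vanishing_moments n p" "ms_integral M p (\<lambda>\<tau>. X (t0 + h * \<tau>)) Y"
  shows "Ex M Y = 0"
proof -
  obtain R where "degree R < n" and mean: "\<And>\<tau>. \<tau> \<in> I \<Longrightarrow> Ex M (X \<tau>) = poly R \<tau>"
    using noise_C3_polynomial_parts[OF assms(2,3)] by metis
  have "Ex M Y = (LINT \<tau>:{0..1}|lborel. p \<tau> * 0)"
  proof (rule ms_integral_Ex_poly_shift[OF assms(1,8,7)])
    show "degree (R \<circ>\<^sub>p [:t0, h:]) < n"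
      using degree_pcompose_linear_le \<open>degree R < n\<close> by (rule le_less_trans)
    show "Ex M (X (t0 + h * \<tau>)) = poly (R \<circ>\<^sub>p [:t0, h:]) \<tau> + 0" if "\<tau> \<in> {0..1}" for \<tau>
      using mean is_interval_affine_segment[OF assms(4-6) that] by (simp add: poly_pcompose_linear)
  qed
  then show ?thesis
    by simp
qed

lemma noise_C2_Cv_ms_integral:
  assumes "prob_space M" "noise_C1 M X" "noise_C2 M X I n" "n \<ge> 1" "is_interval I" "I \<subseteq> {0..}"
    and seg: "t0 \<in> I" "t0 + h1 \<in> I" "t0 + h2 \<in> I"
    and "vanishing_moments n p1" "vanishing_moments n p2"
    and "ms_integral M p1 (\<lambda>\<tau>. X (t0 + h1 * \<tau>)) Y1" "ms_integral M p2 (\<lambda>\<tau>. X (t0 + h2 * \<tau>)) Y2"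
  shows "Cv M Y1 Y2 = (LINT \<tau>:{0..1}|lborel. p1 \<tau> * (LINT s:{0..1}|lborel. p2 s * Cv M (X (h2 * s)) (X (h1 * \<tau>))))"
proof -
  obtain A B where deg: "degree A < n \<or> degree B < n" and shift: "\<And>s \<tau>. t0 + s \<in> I \<Longrightarrow> t0 + \<tau> \<in> I \<Longrightarrow>
      Cv M (X (t0 + s)) (X (t0 + \<tau>)) = poly A \<tau> * poly B s + Cv M (X s) (X \<tau>)"
    using noise_C2_polynomial_parts[OF assms(3,4), of t0] by metis
  show ?thesis
  proof (rule ms_integral_Cv_poly_shift[OF assms(1,12,13,10,11)])
    show "L2rv M (X (t0 + h1 * \<tau>))" "L2rv M (X (t0 + h2 * \<tau>))" if "\<tau> \<in> {0..1}" for \<tau>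
      using noise_C1_L2rv_on_segment[OF assms(2,6,5) seg(1) _ that] seg by auto
    show "degree (A \<circ>\<^sub>p [:0, h1:]) < n \<or> degree (B \<circ>\<^sub>p [:0, h2:]) < n"
      using deg degree_pcompose_linear_le le_less_trans by metis
    show "Cv M (X (t0 + h2 * s)) (X (t0 + h1 * \<tau>))
        = poly (A \<circ>\<^sub>p [:0, h1:]) \<tau> * poly (B \<circ>\<^sub>p [:0, h2:]) s + Cv M (X (h2 * s)) (X (h1 * \<tau>))"
      if "s \<in> {0..1}" "\<tau> \<in> {0..1}" for s \<tau>
      using shift is_interval_affine_segment[OF assms(5) seg(1)] seg that by (simp add: poly_pcompose_linear)
  qed
qed

lemma noise_C3_Cv_ms_integral:
  assumes "prob_space M" "noise_C1 M X" "noise_C3 M X I n" "n \<ge> 1" "is_interval I" "I \<subseteq> {0..}"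
    and seg: "t0 \<in> I" "t0 + h1 \<in> I" "t0 + h2 \<in> I"
    and "vanishing_moments n p1" "vanishing_moments n p2"
    and "ms_integral M p1 (\<lambda>\<tau>. X (t0 + h1 * \<tau>)) Y1" "ms_integral M p2 (\<lambda>\<tau>. X (t0 + h2 * \<tau>)) Y2"
  shows "Cv M Y1 Y2 = 0"
proof -
  obtain A B where deg: "degree A < n \<or> degree B < n"
    and cov: "\<And>s \<tau>. s \<in> I \<Longrightarrow> \<tau> \<in> I \<Longrightarrow> Cv M (X s) (X \<tau>) = poly A \<tau> * poly B s"
    using noise_C3_polynomial_parts[OF assms(3,4)] by metis
  have "Cv M Y1 Y2 = (LINT \<tau>:{0..1}|lborel. p1 \<tau> * (LINT s:{0..1}|lborel. p2 s * 0))"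
  proof (rule ms_integral_Cv_poly_shift[OF assms(1,12,13,10,11)])
    show "L2rv M (X (t0 + h1 * \<tau>))" "L2rv M (X (t0 + h2 * \<tau>))" if "\<tau> \<in> {0..1}" for \<tau>
      using noise_C1_L2rv_on_segment[OF assms(2,6,5) seg(1) _ that] seg by auto
    show "degree (A \<circ>\<^sub>p [:t0, h1:]) < n \<or> degree (B \<circ>\<^sub>p [:t0, h2:]) < n"
      using deg degree_pcompose_linear_le le_less_trans by metis
    show "Cv M (X (t0 + h2 * s)) (X (t0 + h1 * \<tau>)) = poly (A \<circ>\<^sub>p [:t0, h1:]) \<tau> * poly (B \<circ>\<^sub>p [:t0, h2:]) s + 0"
      if "s \<in> {0..1}" "\<tau> \<in> {0..1}" for s \<tau>
      using cov is_interval_affine_segment[OF assms(5) seg(1)] seg that by (simp add: poly_pcompose_linear)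
  qed
  then show ?thesis
    by simp
qed

theorem theorem1:
  fixes M :: "'a measure" and X :: "real \<Rightarrow> 'a \<Rightarrow> real" and I :: "real set"
    and n N :: nat and \<beta> \<mu> \<kappa> \<xi> :: real
  assumes "prob_space M"
    and "open I" and "is_interval I" and "I \<noteq> {}" and "I \<subseteq> {0..}"
    and "n \<ge> 1" and "\<beta> \<in> {-1, 1}" and "\<kappa> > -1" and "\<mu> > -1" and "N \<ge> n" and "\<xi> \<in> {0..1}"
    and "noise_C1 M X" and "noise_C2 M X I n"
  shows
    "(\<forall>T t0 t0' Y Y'. T > 0 \<and> t0 \<in> I \<and> t0 + \<beta> * T \<in> I \<and> t0' \<in> I \<and> t0' + \<beta> * T \<in> I \<and>
        jacobi_noise_error M X n N \<mu> \<kappa> \<xi> \<beta> T t0 Y \<and>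
        jacobi_noise_error M X n N \<mu> \<kappa> \<xi> \<beta> T t0' Y' \<longrightarrow>
        Ex M Y = Ex M Y' \<and> Vr M Y = Vr M Y')
   \<and> (\<forall>T1 T2 t0 t0' Y1 Y2 Y1' Y2'. T1 > 0 \<and> T2 > 0 \<and>
        t0 \<in> I \<and> t0 + \<beta> * T1 \<in> I \<and> t0 + \<beta> * T2 \<in> I \<and>
        t0' \<in> I \<and> t0' + \<beta> * T1 \<in> I \<and> t0' + \<beta> * T2 \<in> I \<and>
        jacobi_noise_error M X n N \<mu> \<kappa> \<xi> \<beta> T1 t0 Y1 \<and>
        jacobi_noise_error M X n N \<mu> \<kappa> \<xi> \<beta> T2 t0 Y2 \<and>
        jacobi_noise_error M X n N \<mu> \<kappa> \<xi> \<beta> T1 t0' Y1' \<and>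
        jacobi_noise_error M X n N \<mu> \<kappa> \<xi> \<beta> T2 t0' Y2' \<longrightarrow>
        Cv M Y1 Y2 = Cv M Y1' Y2')
   \<and> (noise_C3 M X I n \<longrightarrow>
        (\<forall>T t0 Y. T > 0 \<and> t0 \<in> I \<and> t0 + \<beta> * T \<in> I \<and>
            jacobi_noise_error M X n N \<mu> \<kappa> \<xi> \<beta> T t0 Y \<longrightarrow>
            Ex M Y = 0 \<and> Vr M Y = 0)
      \<and> (\<forall>T1 T2 t0 Y1 Y2. T1 > 0 \<and> T2 > 0 \<and>
            t0 \<in> I \<and> t0 + \<beta> * T1 \<in> I \<and> t0 + \<beta> * T2 \<in> I \<and>
            jacobi_noise_error M X n N \<mu> \<kappa> \<xi> \<beta> T1 t0 Y1 \<and>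
            jacobi_noise_error M X n N \<mu> \<kappa> \<xi> \<beta> T2 t0 Y2 \<longrightarrow>
            Cv M Y1 Y2 = 0))"
proof -
  note P = assms(1) and iv = assms(3) and I0 = assms(5) and n = assms(6)
    and C1 = assms(12) and C2 = assms(13)
  have vm: "vanishing_moments n (jac_kernel n N \<mu> \<kappa> \<xi> h)" for h
    using assms(9,8) by (rule vanishing_moments_jac_kernel)
  let ?e = "jacobi_noise_error M X n N \<mu> \<kappa> \<xi> \<beta>" and ?p = "\<lambda>T. jac_kernel n N \<mu> \<kappa> \<xi> (\<beta> * T)"
  note ms = jacobi_noise_error_def
  have Ex_C2: "Ex M Y = (LINT \<tau>:{0..1}|lborel. ?p T \<tau> * Ex M (X (\<beta> * T * \<tau>)))"
    if "t0 \<in> I" "t0 + \<beta> * T \<in> I" "?e T t0 Y" for T t0 Y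
    using noise_C2_Ex_ms_integral[OF P C2 n iv that(1,2) vm that(3)[unfolded ms]] .
  have Cv_C2: "Cv M Y1 Y2 = (LINT \<tau>:{0..1}|lborel. ?p T1 \<tau> *
      (LINT s:{0..1}|lborel. ?p T2 s * Cv M (X (\<beta> * T2 * s)) (X (\<beta> * T1 * \<tau>))))"
    if "t0 \<in> I" "t0 + \<beta> * T1 \<in> I" "t0 + \<beta> * T2 \<in> I" "?e T1 t0 Y1" "?e T2 t0 Y2" for T1 T2 t0 Y1 Y2
    using noise_C2_Cv_ms_integral[OF P C1 C2 n iv I0 that(1-3) vm vm that(4,5)[unfolded ms]] .
  have Ex_C3: "Ex M Y = 0"
    if "noise_C3 M X I n" "t0 \<in> I" "t0 + \<beta> * T \<in> I" "?e T t0 Y" for T t0 Y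
    using noise_C3_Ex_ms_integral[OF P that(1) n iv that(2,3) vm that(4)[unfolded ms]] .
  have Cv_C3: "Cv M Y1 Y2 = 0"
    if "noise_C3 M X I n" "t0 \<in> I" "t0 + \<beta> * T1 \<in> I" "t0 + \<beta> * T2 \<in> I" "?e T1 t0 Y1" "?e T2 t0 Y2"
    for T1 T2 t0 Y1 Y2
    using noise_C3_Cv_ms_integral[OF P C1 that(1) n iv I0 that(2-4) vm vm that(5,6)[unfolded ms]] .
  show ?thesis
    unfolding Vr_def
    apply (intro conjI allI impI; elim conjE)
    subgoal for T t0 t0' Y Y' using Ex_C2[of t0 T Y] Ex_C2[of t0' T Y'] by simp
    subgoal for T t0 t0' Y Y' using Cv_C2[of t0 T T Y Y] Cv_C2[of t0' T T Y' Y'] by simp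
    subgoal for T1 T2 t0 t0' Y1 Y2 Y1' Y2' using Cv_C2[of t0 T1 T2 Y1 Y2] Cv_C2[of t0' T1 T2 Y1' Y2'] by simp
    subgoal for T t0 Y using Ex_C3 by blast
    subgoal for T t0 Y using Cv_C3[of t0 T T Y Y] by simp
    subgoal for T1 T2 t0 Y1 Y2 using Cv_C3[of t0 T1 T2 Y1 Y2] by simp
    done
qed

end
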